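(* Given a c.e. transitive relation $\prec$ on $\omega$ and a c.e. sequence $(A_i)_{i\in\omega}$ of co-c.e. closed subsets of $\mathcal{I}(\prec)$, one can compute a c.e. transitive relation $\sqsubset$ on $\omega$ such that $\mathcal{I}(\sqsubset)$ is computably homeomorphic to the space obtained by adding each $A_i$ ($i\in\omega$) as a c.e. open set to the topology of $\mathcal{I}(\prec)$.
   Context: For a transitive relation $\prec$ on $\omega$, an ideal is a non-empty set $I\subseteq\omega$ which is a lower set and directed with respect to $\prec$; $\mathcal{I}(\prec)$ is the space of ideals with topology generated by $[n]_\prec=\{I\mid n\in I\}$, numbered by $n$. A c.e. sequence of co-c.e. closed sets means there is a uniformly c.e. family $(W_i)$ of subsets of $\omega$ with $\mathcal{I}(\prec)\setminus A_i=\bigcup_{n\in W_i}[n]_\prec$. Adding the $A_i$ as c.e. open sets means the topology generated by all $[n]_\prec$ and all $A_i$, with effective base consisting of the finite intersections of these sets (suitably numbered). A computable homeomorphism is a homeomorphism such that preimages of basic open sets under it and its inverse are uniformly c.e. unions of basic open sets. *)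

theory Defs
  imports "HOL-Analysis.Analysis" "HOL-Library.Nat_Bijection"
begin

definition proj :: "nat \<Rightarrow> nat list \<Rightarrow> nat" where
  "proj i xs = (if i < length xs then xs ! i else 0)"

inductive PR :: "(nat list \<Rightarrow> nat) \<Rightarrow> bool" where
  PR_zero: "PR (\<lambda>_. 0)"
| PR_succ: "PR (\<lambda>xs. Suc (proj 0 xs))"
| PR_proj: "PR (proj i)"
| PR_comp: "PR g \<Longrightarrow> \<forall>f\<in>set fs. PR f \<Longrightarrow> PR (\<lambda>xs. g (map (\<lambda>f. f xs) fs))"
| PR_rec: "PR g \<Longrightarrow> PR h \<Longrightarrow>
     PR (\<lambda>xs. rec_nat (g (tl xs)) (\<lambda>n r. h (r # n # tl xs)) (proj 0 xs))"

text \<open>A predicate on k-tuples (lists of length k) is c.e. iff it is the projection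
  of a primitive recursive predicate (Kleene normal form).\<close>
definition ce_on :: "nat \<Rightarrow> (nat list \<Rightarrow> bool) \<Rightarrow> bool" where
  "ce_on k P \<longleftrightarrow> (\<exists>f. PR f \<and> (\<forall>xs. length xs = k \<longrightarrow> (P xs \<longleftrightarrow> (\<exists>y. f (y # xs) \<noteq> 0))))"

definition ce2 :: "(nat \<Rightarrow> nat \<Rightarrow> bool) \<Rightarrow> bool" where
  "ce2 R \<longleftrightarrow> ce_on 2 (\<lambda>xs. R (xs ! 0) (xs ! 1))"

definition ce3 :: "(nat \<Rightarrow> nat \<Rightarrow> nat \<Rightarrow> bool) \<Rightarrow> bool" where
  "ce3 R \<longleftrightarrow> ce_on 3 (\<lambda>xs. R (xs ! 0) (xs ! 1) (xs ! 2))"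

definition is_ideal :: "(nat \<Rightarrow> nat \<Rightarrow> bool) \<Rightarrow> nat set \<Rightarrow> bool" where
  "is_ideal R I \<longleftrightarrow> I \<noteq> {} \<and> (\<forall>n\<in>I. \<forall>m. R m n \<longrightarrow> m \<in> I)
     \<and> (\<forall>a\<in>I. \<forall>b\<in>I. \<exists>c\<in>I. R a c \<and> R b c)"

definition Ideals :: "(nat \<Rightarrow> nat \<Rightarrow> bool) \<Rightarrow> nat set set" where
  "Ideals R = {I. is_ideal R I}"

definition bopen :: "(nat \<Rightarrow> nat \<Rightarrow> bool) \<Rightarrow> nat \<Rightarrow> nat set set" where
  "bopen R n = {I \<in> Ideals R. n \<in> I}"

definition ideal_topology :: "(nat \<Rightarrow> nat \<Rightarrow> bool) \<Rightarrow> nat set topology" where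
  "ideal_topology R = topology_generated_by (range (bopen R))"

text \<open>Co-c.e. closed set A_i given by W: complement is the union of [n] with W i n.\<close>
definition coce_closed :: "(nat \<Rightarrow> nat \<Rightarrow> bool) \<Rightarrow> (nat \<Rightarrow> nat \<Rightarrow> bool) \<Rightarrow> nat \<Rightarrow> nat set set" where
  "coce_closed R W i = Ideals R - (\<Union>n\<in>{n. W i n}. bopen R n)"

text \<open>Subbasic sets of the extended space: code 2n is [n]_R, code 2i+1 is A_i.\<close>
definition subbasic :: "(nat \<Rightarrow> nat \<Rightarrow> bool) \<Rightarrow> (nat \<Rightarrow> nat \<Rightarrow> bool) \<Rightarrow> nat \<Rightarrow> nat set set" where
  "subbasic R W j = (if even j then bopen R (j div 2) else coce_closed R W (j div 2))"

text \<open>Basic sets of the extended space: finite intersections, indexed by the canonical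
  code k of the finite set set_decode k of subbasic codes (empty intersection = whole space).\<close>
definition ext_basic :: "(nat \<Rightarrow> nat \<Rightarrow> bool) \<Rightarrow> (nat \<Rightarrow> nat \<Rightarrow> bool) \<Rightarrow> nat \<Rightarrow> nat set set" where
  "ext_basic R W k = Ideals R \<inter> (\<Inter>j\<in>set_decode k. subbasic R W j)"

definition ext_topology :: "(nat \<Rightarrow> nat \<Rightarrow> bool) \<Rightarrow> (nat \<Rightarrow> nat \<Rightarrow> bool) \<Rightarrow> nat set topology" where
  "ext_topology R W = topology_generated_by (range (bopen R) \<union> range (coce_closed R W))"

definition computably_homeomorphic ::
  "(nat \<Rightarrow> nat \<Rightarrow> bool) \<Rightarrow> (nat \<Rightarrow> nat \<Rightarrow> bool) \<Rightarrow> (nat \<Rightarrow> nat \<Rightarrow> bool) \<Rightarrow> bool" where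
  "computably_homeomorphic R W S \<longleftrightarrow>
    (\<exists>f g V V'. homeomorphic_maps (ext_topology R W) (ideal_topology S) f g
       \<and> ce2 V \<and> ce2 V'
       \<and> (\<forall>m. {x \<in> topspace (ext_topology R W). f x \<in> bopen S m}
               = (\<Union>k\<in>{k. V m k}. ext_basic R W k))
       \<and> (\<forall>k. {y \<in> topspace (ideal_topology S). g y \<in> ext_basic R W k}
               = (\<Union>m\<in>{m. V' k m}. bopen S m)))"

end

theory Submission
  imports Defs
begin

text \<open>The relation \<open>\<sqsubset>\<close> lives on finite conditions \<open>x = \<langle>m, G, E, t, s\<rangle>\<close>. A valid
  condition contains every pair enumerated into \<open>\<prec>\<close> below \<open>t\<close> by stage \<open>t\<close>, and it decides
  every index \<open>i < t\<close>: either \<open>i \<in> G\<close>, a promise that the ideal lies in \<open>A\<^sub>i\<close>, or some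
  \<open>n\<close> with \<open>(n, m) \<in> E\<close> is seen in \<open>W\<^sub>i\<close> by stage \<open>s\<close>. Put \<open>x \<sqsubset> y\<close> if \<open>y\<close> extends \<open>x\<close>
  (\<open>E\<close> and \<open>G\<close> grow, \<open>t\<close> increases) and \<open>(m\<^sub>x, m\<^sub>y) \<in> E\<^sub>y\<close>. An ideal \<open>I\<close> of \<open>\<prec>\<close> goes to
  the conditions whose top lies in \<open>I\<close> and whose promises hold for \<open>I\<close>; an ideal \<open>J\<close> of \<open>\<sqsubset>\<close>
  goes to the \<open>\<prec>\<close>-predecessors of its tops. Since \<open>J\<close> contains conditions of every stage,
  every index is eventually decided along \<open>J\<close>, which makes the two maps mutually inverse.
  The preimage of \<open>[x]\<^sub>\<sqsubset>\<close> is the basic set asking for \<open>m\<^sub>x \<in> I\<close> and \<open>I \<in> A\<^sub>i\<close> for \<open>i \<in> G\<^sub>x\<close>,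
  and everything is primitive recursive in the stage approximations, uniformly in the
  index of the relation.\<close>

section \<open>Primitive recursive functions and predicates\<close>

lemma proj_Cons_0 [simp]: "proj 0 (x # xs) = x"
  by (simp add: proj_def)

lemma proj_Cons_Suc [simp]: "proj (Suc i) (x # xs) = proj i xs"
  by (simp add: proj_def)

lemma proj_Cons_numeral [simp]: "proj (numeral k) (x # xs) = proj (pred_numeral k) xs"
  by (simp add: numeral_eq_Suc)

lemma proj_Nil [simp]: "proj i [] = 0"
  by (simp add: proj_def)

lemma proj_tl: "proj i (tl xs) = proj (Suc i) xs"
  by (cases xs) simp_all

lemma PR_cong: "PR f \<Longrightarrow> (\<And>xs. f xs = g xs) \<Longrightarrow> PR g"
  by (metis ext)

text \<open>A primitive recursive function reads only finitely many arguments, so a function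
  whose arguments are produced componentwise by primitive recursive functions is again
  primitive recursive, however the argument list is built.\<close>

definition determined_by_prefix :: "(nat list \<Rightarrow> nat) \<Rightarrow> nat \<Rightarrow> bool" where
  "determined_by_prefix f N \<longleftrightarrow> (\<forall>xs ys. (\<forall>i<N. proj i xs = proj i ys) \<longrightarrow> f xs = f ys)"

lemma determined_by_prefix_mono:
  "determined_by_prefix f N \<Longrightarrow> N \<le> M \<Longrightarrow> determined_by_prefix f M"
  unfolding determined_by_prefix_def by (meson less_le_trans)

lemma determined_by_common_prefix:
  assumes "finite F" "\<forall>f\<in>F. \<exists>N. determined_by_prefix f N"
  shows "\<exists>N. \<forall>f\<in>F. determined_by_prefix f N"
  using assms
proof (induction F)
  case (insert f F)
  then obtain N M where "\<forall>g\<in>F. determined_by_prefix g N" "determined_by_prefix f M"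
    by auto
  then show ?case
    by (metis determined_by_prefix_mono insert_iff max.cobounded1 max.cobounded2)
qed simp

lemma determined_by_prefix_map:
  assumes "\<forall>f\<in>set fs. determined_by_prefix f N"
  shows "determined_by_prefix (\<lambda>xs. g (map (\<lambda>f. f xs) fs)) N"
  unfolding determined_by_prefix_def
proof (intro allI impI)
  fix xs ys :: "nat list"
  assume "\<forall>i<N. proj i xs = proj i ys"
  then have "map (\<lambda>f. f xs) fs = map (\<lambda>f. f ys) fs"
    using assms unfolding determined_by_prefix_def by simp
  then show "g (map (\<lambda>f. f xs) fs) = g (map (\<lambda>f. f ys) fs)"
    by (rule arg_cong)
qed

lemma determined_by_prefix_rec_nat:
  assumes g: "determined_by_prefix g Ng" and h: "determined_by_prefix h Nh"
  shows "determined_by_prefix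
    (\<lambda>xs. rec_nat (g (tl xs)) (\<lambda>n r. h (r # n # tl xs)) (proj 0 xs)) (Suc (Ng + Nh))"
  unfolding determined_by_prefix_def
proof (intro allI impI)
  fix xs ys :: "nat list"
  assume agree: "\<forall>i<Suc (Ng + Nh). proj i xs = proj i ys"
  have "g (tl xs) = g (tl ys)"
    using g agree unfolding determined_by_prefix_def by (auto simp: proj_tl)
  moreover have "h (r # n # tl xs) = h (r # n # tl ys)" for r n
  proof -
    have "proj i (r # n # tl xs) = proj i (r # n # tl ys)" if "i < Nh" for i
      using agree that by (cases i; cases "i - 1") (auto simp: proj_tl)
    then show ?thesis
      using h unfolding determined_by_prefix_def by blast
  qed
  moreover have "proj 0 xs = proj 0 ys"
    using agree by auto
  ultimately show "rec_nat (g (tl xs)) (\<lambda>n r. h (r # n # tl xs)) (proj 0 xs) =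
      rec_nat (g (tl ys)) (\<lambda>n r. h (r # n # tl ys)) (proj 0 ys)"
    by simp
qed

lemma PR_determined_by_prefix: "PR f \<Longrightarrow> \<exists>N. determined_by_prefix f N"
proof (induction rule: PR.induct)
  case PR_zero
  then show ?case by (auto simp: determined_by_prefix_def)
next
  case PR_succ
  show ?case by (rule exI[of _ 1]) (auto simp: determined_by_prefix_def)
next
  case (PR_proj i)
  show ?case by (rule exI[of _ "Suc i"]) (auto simp: determined_by_prefix_def)
next
  case (PR_comp g fs)
  then have "\<forall>f\<in>set fs. \<exists>N. determined_by_prefix f N"
    by blast
  then obtain N where "\<forall>f\<in>set fs. determined_by_prefix f N"
    using determined_by_common_prefix[of "set fs"] by blast
  then show ?case
    using determined_by_prefix_map by blast
next
  case (PR_rec g h)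
  then show ?case
    using determined_by_prefix_rec_nat by blast
qed

lemma PR_comp_componentwise:
  assumes "PR f" "\<And>i. PR (H i)" "\<And>xs i. proj i (L xs) = H i xs"
  shows "PR (\<lambda>xs. f (L xs))"
proof -
  obtain N where N: "determined_by_prefix f N"
    using PR_determined_by_prefix[OF assms(1)] by auto
  have "PR (\<lambda>xs. f (map (\<lambda>h. h xs) (map H [0..<N])))"
    using assms(1,2) by (intro PR_comp) auto
  moreover have "f (map (\<lambda>h. h xs) (map H [0..<N])) = f (L xs)" for xs
    using N assms(3) unfolding determined_by_prefix_def by (auto simp: proj_def)
  ultimately show ?thesis by (rule PR_cong)
qed

lemma PR_tl: "PR f \<Longrightarrow> PR (\<lambda>xs. f (tl xs))"
  by (rule PR_comp_componentwise[where H = "\<lambda>i. proj (Suc i)"])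
    (auto intro: PR_proj simp: proj_tl)

lemma PR_Cons: "PR f \<Longrightarrow> PR b \<Longrightarrow> PR (\<lambda>xs. f (b xs # xs))"
  by (rule PR_comp_componentwise[where H = "\<lambda>i. if i = 0 then b else proj (i - 1)"])
    (auto intro: PR_proj simp: proj_def nth_Cons')

lemma PR_proj_tl: "PR (\<lambda>xs. proj i (tl xs))"
  by (simp add: proj_tl PR_proj)

lemma PR_const: "PR (\<lambda>_. c)"
proof (induction c)
  case 0
  show ?case by (rule PR_zero)
next
  case (Suc c)
  then have "PR (\<lambda>xs. Suc (proj 0 (map (\<lambda>f. f xs) [\<lambda>_. c])))"
    using PR_comp[OF PR_succ, of "[\<lambda>_. c]"] by simp
  then show ?case by (rule PR_cong) simp
qed

lemma PR_comp1: "PR h \<Longrightarrow> PR f \<Longrightarrow> PR (\<lambda>xs. h [f xs])"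
  using PR_comp[of h "[f]"] by simp

lemma PR_comp2: "PR h \<Longrightarrow> PR f \<Longrightarrow> PR g \<Longrightarrow> PR (\<lambda>xs. h [f xs, g xs])"
  using PR_comp[of h "[f, g]"] by simp

lemma PR_comp4:
  "PR h \<Longrightarrow> PR f \<Longrightarrow> PR g \<Longrightarrow> PR k \<Longrightarrow> PR l \<Longrightarrow> PR (\<lambda>xs. h [f xs, g xs, k xs, l xs])"
  using PR_comp[of h "[f, g, k, l]"] by simp

lemma rec_nat_eqI: "F 0 = a \<Longrightarrow> (\<And>n. F (Suc n) = H n (F n)) \<Longrightarrow> rec_nat a H k = F k"
  by (induction k) auto

lemma PR_rec_eq:
  "PR g \<Longrightarrow> PR h \<Longrightarrow> (\<And>xs. rec_nat (g (tl xs)) (\<lambda>n r. h (r # n # tl xs)) (proj 0 xs) = F xs)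
    \<Longrightarrow> PR F"
  using PR_rec PR_cong by blast

lemma PR_add: "PR f \<Longrightarrow> PR g \<Longrightarrow> PR (\<lambda>xs. f xs + g xs)"
proof -
  have "PR (\<lambda>xs. proj 0 xs + proj 1 xs)"
    by (rule PR_rec_eq[OF PR_proj PR_succ], rule rec_nat_eqI[where F = "\<lambda>k. k + proj 1 xs" for xs])
      (simp_all add: proj_tl)
  then show "PR f \<Longrightarrow> PR g \<Longrightarrow> ?thesis"
    using PR_comp2 by fastforce
qed

lemma PR_diff: "PR f \<Longrightarrow> PR g \<Longrightarrow> PR (\<lambda>xs. f xs - g xs)"
proof -
  have pred: "PR (\<lambda>xs. proj 0 xs - 1)"
    by (rule PR_rec_eq[OF PR_zero PR_proj[of 1]], rule rec_nat_eqI[where F = "\<lambda>k. k - 1"]) simp_all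
  have "PR (\<lambda>xs. proj 1 xs - proj 0 xs)"
    by (rule PR_rec_eq[OF PR_proj[of 0] pred], rule rec_nat_eqI[where F = "\<lambda>k. proj 1 xs - k" for xs])
      (simp_all add: proj_tl)
  then show "PR f \<Longrightarrow> PR g \<Longrightarrow> ?thesis"
    using PR_comp2 by fastforce
qed

lemma PR_mult: "PR f \<Longrightarrow> PR g \<Longrightarrow> PR (\<lambda>xs. f xs * g xs)"
proof -
  have "PR (\<lambda>xs. proj 0 xs + proj 2 xs)"
    by (intro PR_add PR_proj)
  then have "PR (\<lambda>xs. proj 0 xs * proj 1 xs)"
    by (rule PR_rec_eq[OF PR_zero], intro rec_nat_eqI[where F = "\<lambda>k. k * proj 1 xs" for xs])
      (simp_all add: proj_tl)
  then show "PR f \<Longrightarrow> PR g \<Longrightarrow> ?thesis"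
    using PR_comp2 by fastforce
qed

lemma PR_Suc: "PR f \<Longrightarrow> PR (\<lambda>xs. Suc (f xs))"
  using PR_add[OF _ PR_const[of 1]] by simp

lemma PR_triangle: "PR f \<Longrightarrow> PR (\<lambda>xs. triangle (f xs))"
proof -
  have "PR (\<lambda>xs. proj 0 xs + Suc (proj 1 xs))"
    by (intro PR_add PR_Suc PR_proj)
  then have "PR (\<lambda>xs. triangle (proj 0 xs))"
    by (rule PR_rec_eq[OF PR_zero], intro rec_nat_eqI[where F = triangle]) simp_all
  then show "PR f \<Longrightarrow> ?thesis"
    using PR_comp1 by fastforce
qed

lemma PR_power2: "PR f \<Longrightarrow> PR (\<lambda>xs. 2 ^ f xs)"
proof -
  have "PR (\<lambda>xs. proj 0 xs + proj 0 xs)"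
    by (intro PR_add PR_proj)
  then have "PR (\<lambda>xs. 2 ^ proj 0 xs)"
    by (rule PR_rec_eq[OF PR_const], intro rec_nat_eqI[where F = "\<lambda>k. 2 ^ k"]) simp_all
  then show "PR f \<Longrightarrow> ?thesis"
    using PR_comp1 by fastforce
qed

lemma PR_mod2: "PR f \<Longrightarrow> PR (\<lambda>xs. f xs mod 2)"
proof -
  have "PR (\<lambda>xs. 1 - proj 0 xs)"
    by (intro PR_diff PR_const PR_proj)
  then have "PR (\<lambda>xs. proj 0 xs mod 2)"
    by (rule PR_rec_eq[OF PR_zero], intro rec_nat_eqI[where F = "\<lambda>k. k mod 2"])
      (simp_all add: mod_Suc)
  then show "PR f \<Longrightarrow> ?thesis"
    using PR_comp1 by fastforce
qed

lemma PR_sum_lessThan: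
  assumes "PR (\<lambda>ys. F (proj 0 ys) (tl ys))" "PR b"
  shows "PR (\<lambda>xs. \<Sum>y<b xs. F y xs)"
proof -
  have "PR (\<lambda>zs. proj 0 zs + F (proj 0 (tl zs)) (tl (tl zs)))"
    by (intro PR_add PR_proj PR_tl[OF assms(1)])
  then have "PR (\<lambda>ys. \<Sum>y<proj 0 ys. F y (tl ys))"
    by (rule PR_rec_eq[OF PR_zero], intro rec_nat_eqI[where F = "\<lambda>k. \<Sum>y<k. F y (tl xs)" for xs])
      simp_all
  from PR_Cons[OF this assms(2)] show ?thesis
    by simp
qed

lemma sum_indicator_lessThan: "(\<Sum>j<n. if j < m then 1 else 0) = min m (n::nat)"
  by (induction n) (auto simp: min_def)

lemma div_eq_sum: "0 < (d::nat) \<Longrightarrow> n div d = (\<Sum>j<n. if Suc j * d \<le> n then 1 else 0)"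
proof -
  assume "0 < d"
  then have "Suc j * d \<le> n \<longleftrightarrow> j < n div d" for j
    by (metis Suc_le_eq less_eq_div_iff_mult_less_eq)
  then have "(\<Sum>j<n. if Suc j * d \<le> n then 1 else 0) = min (n div d) n"
    by (simp only: sum_indicator_lessThan)
  then show ?thesis
    by simp
qed

definition PR_pred :: "(nat list \<Rightarrow> bool) \<Rightarrow> bool" where
  "PR_pred P \<longleftrightarrow> PR (\<lambda>xs. if P xs then 1 else 0)"

lemma PR_pred_eq:
  assumes "PR f" "PR g"
  shows "PR_pred (\<lambda>xs. f xs = g xs)"
proof -
  have "PR (\<lambda>xs. 1 - ((f xs - g xs) + (g xs - f xs)))"
    by (intro PR_diff PR_add PR_const assms)
  then show ?thesis
    unfolding PR_pred_def by (rule PR_cong) auto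
qed

lemma PR_pred_less:
  assumes "PR f" "PR g"
  shows "PR_pred (\<lambda>xs. f xs < g xs)"
proof -
  have "PR (\<lambda>xs. 1 - (1 - (g xs - f xs)))"
    by (intro PR_diff PR_const assms)
  then show ?thesis
    unfolding PR_pred_def by (rule PR_cong) auto
qed

lemma PR_pred_le: "PR f \<Longrightarrow> PR g \<Longrightarrow> PR_pred (\<lambda>xs. f xs \<le> g xs)"
  using PR_pred_less[OF _ PR_Suc] by (simp add: less_Suc_eq_le)

lemma PR_pred_conj:
  assumes "PR_pred P" "PR_pred Q"
  shows "PR_pred (\<lambda>xs. P xs \<and> Q xs)"
proof -
  have "PR (\<lambda>xs. (if P xs then 1 else 0) * (if Q xs then 1 else 0))"
    using assms unfolding PR_pred_def by (intro PR_mult)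
  then show ?thesis
    unfolding PR_pred_def by (rule PR_cong) auto
qed

lemma PR_pred_not:
  assumes "PR_pred P"
  shows "PR_pred (\<lambda>xs. \<not> P xs)"
proof -
  have "PR (\<lambda>xs. 1 - (if P xs then 1 else 0))"
    using assms unfolding PR_pred_def by (intro PR_diff PR_const)
  then show ?thesis
    unfolding PR_pred_def by (rule PR_cong) auto
qed

lemma PR_pred_disj: "PR_pred P \<Longrightarrow> PR_pred Q \<Longrightarrow> PR_pred (\<lambda>xs. P xs \<or> Q xs)"
  using PR_pred_not[OF PR_pred_conj[OF PR_pred_not PR_pred_not]] by simp

lemma PR_pred_imp: "PR_pred P \<Longrightarrow> PR_pred Q \<Longrightarrow> PR_pred (\<lambda>xs. P xs \<longrightarrow> Q xs)"
  using PR_pred_disj[OF PR_pred_not] by simp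

lemma PR_pred_nonzero: "PR f \<Longrightarrow> PR_pred (\<lambda>xs. f xs \<noteq> 0)"
  using PR_pred_not[OF PR_pred_eq[OF _ PR_const[of 0]]] by simp

lemma PR_If:
  assumes "PR_pred P" "PR f" "PR g"
  shows "PR (\<lambda>xs. if P xs then f xs else g xs)"
proof -
  have "PR (\<lambda>xs. (if P xs then 1 else 0) * f xs + (1 - (if P xs then 1 else 0)) * g xs)"
    using assms unfolding PR_pred_def by (intro PR_add PR_mult PR_diff PR_const)
  then show ?thesis by (rule PR_cong) auto
qed

lemma PR_pred_bex_less:
  assumes "PR_pred (\<lambda>ys. P (proj 0 ys) (tl ys))" "PR b"
  shows "PR_pred (\<lambda>xs. \<exists>y<b xs. P y xs)"
proof -
  have "PR (\<lambda>xs. \<Sum>y<b xs. if P y xs then 1 else 0)"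
    using assms unfolding PR_pred_def by (intro PR_sum_lessThan) simp_all
  then have "PR_pred (\<lambda>xs. (\<Sum>y<b xs. if P y xs then 1 else 0) \<noteq> (0::nat))"
    by (rule PR_pred_nonzero)
  moreover have "(\<Sum>y<b xs. if P y xs then 1 else 0) \<noteq> (0::nat) \<longleftrightarrow> (\<exists>y<b xs. P y xs)" for xs
    by (subst sum_nonneg_eq_0_iff) auto
  ultimately show ?thesis
    by simp
qed

lemma PR_pred_ball_less:
  assumes "PR_pred (\<lambda>ys. P (proj 0 ys) (tl ys))" "PR b"
  shows "PR_pred (\<lambda>xs. \<forall>y<b xs. P y xs)"
  using PR_pred_not[OF PR_pred_bex_less[OF PR_pred_not[OF assms(1)] assms(2)]] by simp

lemma PR_pred_odd: "PR f \<Longrightarrow> PR_pred (\<lambda>xs. odd (f xs))"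
  using PR_pred_eq[OF PR_mod2 PR_const[of 1]] by (simp add: odd_iff_mod_2_eq_one)

lemma PR_pred_even: "PR f \<Longrightarrow> PR_pred (\<lambda>xs. even (f xs))"
  using PR_pred_not[OF PR_pred_odd] by simp

lemma PR_prod_encode: "PR f \<Longrightarrow> PR g \<Longrightarrow> PR (\<lambda>xs. prod_encode (f xs, g xs))"
  unfolding prod_encode_def by (simp add: PR_add PR_triangle)

lemma prod_decode_eq_sums:
  "fst (prod_decode z) = (\<Sum>a<Suc z. if \<exists>b<Suc z. prod_encode (a, b) = z then a else 0)"
  "snd (prod_decode z) = (\<Sum>b<Suc z. if \<exists>a<Suc z. prod_encode (a, b) = z then b else 0)"
proof -
  obtain a0 b0 where z: "z = prod_encode (a0, b0)"
    by (metis prod_decode_inverse surj_pair)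
  have "a0 \<le> z" "b0 \<le> z"
    using z le_prod_encode_1 le_prod_encode_2 by auto
  moreover have "(\<exists>b<Suc z. prod_encode (a, b) = z) \<longleftrightarrow> a = a0"
    and "(\<exists>a<Suc z. prod_encode (a, b) = z) \<longleftrightarrow> b = b0" for a b
    using z calculation by auto
  ultimately show "fst (prod_decode z) = (\<Sum>a<Suc z. if \<exists>b<Suc z. prod_encode (a, b) = z then a else 0)"
    "snd (prod_decode z) = (\<Sum>b<Suc z. if \<exists>a<Suc z. prod_encode (a, b) = z then b else 0)"
    using z by simp_all
qed

lemma PR_fst_prod_decode:
  assumes "PR f"
  shows "PR (\<lambda>xs. fst (prod_decode (f xs)))"
proof -
  have "PR (\<lambda>xs. \<Sum>a<Suc (f xs). if \<exists>b<Suc (f xs). prod_encode (a, b) = f xs then a else 0)"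
    by (intro PR_sum_lessThan PR_If PR_pred_bex_less PR_pred_eq PR_prod_encode PR_Suc PR_proj
        PR_proj_tl PR_const PR_tl[OF assms] PR_tl[OF PR_tl[OF assms]] assms)
  then show ?thesis
    by (simp only: prod_decode_eq_sums)
qed

lemma PR_snd_prod_decode:
  assumes "PR f"
  shows "PR (\<lambda>xs. snd (prod_decode (f xs)))"
proof -
  have "PR (\<lambda>xs. \<Sum>b<Suc (f xs). if \<exists>a<Suc (f xs). prod_encode (a, b) = f xs then b else 0)"
    by (intro PR_sum_lessThan PR_If PR_pred_bex_less PR_pred_eq PR_prod_encode PR_Suc PR_proj
        PR_proj_tl PR_const PR_tl[OF assms] PR_tl[OF PR_tl[OF assms]] assms)
  then show ?thesis
    by (simp only: prod_decode_eq_sums)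
qed

lemma mem_set_decode_iff_sum:
  "a \<in> set_decode G \<longleftrightarrow> (\<Sum>j<G. if Suc j * 2 ^ a \<le> G then 1 else 0) mod 2 = (1::nat)"
proof -
  have "G div 2 ^ a = (\<Sum>j<G. if Suc j * 2 ^ a \<le> G then 1 else 0)"
    by (rule div_eq_sum) simp
  then show ?thesis
    by (simp only: set_decode_def mem_Collect_eq odd_iff_mod_2_eq_one)
qed

lemma PR_pred_mem_set_decode:
  assumes "PR f" "PR g"
  shows "PR_pred (\<lambda>xs. f xs \<in> set_decode (g xs))"
  unfolding mem_set_decode_iff_sum
  by (intro PR_pred_eq PR_mod2 PR_sum_lessThan PR_If PR_pred_le PR_mult PR_power2 PR_Suc PR_proj
      PR_const PR_tl[OF assms(1)] PR_tl[OF assms(2)] assms)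

lemma PR_div2:
  assumes "PR f"
  shows "PR (\<lambda>xs. f xs div 2)"
proof -
  have "PR (\<lambda>xs. \<Sum>j<f xs. if Suc j * 2 \<le> f xs then 1 else 0)"
    by (intro PR_sum_lessThan PR_If PR_pred_le PR_mult PR_Suc PR_proj PR_const PR_tl[OF assms] assms)
  then show ?thesis
    by (simp add: div_eq_sum[of 2])
qed

section \<open>Finite conditions\<close>

text \<open>A condition codes a quintuple \<open>\<langle>m, G, E, t, s\<rangle>\<close>: an element \<open>m\<close> (the top of the
  condition), a finite set \<open>G\<close> of indices \<open>i\<close> promising that the ideal lies in \<open>A\<^sub>i\<close>,
  a finite relation \<open>E\<close> approximating \<open>\<prec>\<close>, the stage \<open>t\<close> up to which the condition is
  complete, and a stage \<open>s\<close> by which everything it asserts has been enumerated.\<close>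

definition cond_encode :: "nat \<Rightarrow> nat \<Rightarrow> nat \<Rightarrow> nat \<Rightarrow> nat \<Rightarrow> nat" where
  "cond_encode m G E t s = prod_encode (m, prod_encode (G, prod_encode (E, prod_encode (t, s))))"

definition cond_top :: "nat \<Rightarrow> nat" where
  "cond_top x = fst (prod_decode x)"

definition cond_promise_code :: "nat \<Rightarrow> nat" where
  "cond_promise_code x = fst (prod_decode (snd (prod_decode x)))"

definition cond_edge_code :: "nat \<Rightarrow> nat" where
  "cond_edge_code x = fst (prod_decode (snd (prod_decode (snd (prod_decode x)))))"

definition cond_stage :: "nat \<Rightarrow> nat" where
  "cond_stage x = fst (prod_decode (snd (prod_decode (snd (prod_decode (snd (prod_decode x)))))))"

definition cond_bound :: "nat \<Rightarrow> nat" where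
  "cond_bound x = snd (prod_decode (snd (prod_decode (snd (prod_decode (snd (prod_decode x)))))))"

lemma cond_encode_sel [simp]:
  "cond_top (cond_encode m G E t s) = m"
  "cond_promise_code (cond_encode m G E t s) = G"
  "cond_edge_code (cond_encode m G E t s) = E"
  "cond_stage (cond_encode m G E t s) = t"
  "cond_bound (cond_encode m G E t s) = s"
  by (simp_all add: cond_encode_def cond_top_def cond_promise_code_def cond_edge_code_def
      cond_stage_def cond_bound_def)

definition cond_edge :: "nat \<Rightarrow> nat \<Rightarrow> nat \<Rightarrow> bool" where
  "cond_edge x a b \<longleftrightarrow> prod_encode (a, b) \<in> set_decode (cond_edge_code x)"

definition cond_promises :: "nat \<Rightarrow> nat \<Rightarrow> bool" where
  "cond_promises x i \<longleftrightarrow> i \<in> set_decode (cond_promise_code x)"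

lemma less_of_mem_set_decode: "n \<in> set_decode x \<Longrightarrow> n < x"
proof -
  assume "n \<in> set_decode x"
  then have "x div 2 ^ n \<noteq> 0"
    by (metis even_zero set_decode_def mem_Collect_eq)
  then have "2 ^ n \<le> x"
    by (simp add: div_eq_0_iff not_less)
  then show ?thesis
    using less_exp[of n] by linarith
qed

lemma cond_promises_less: "cond_promises x i \<Longrightarrow> i < cond_promise_code x"
  unfolding cond_promises_def by (rule less_of_mem_set_decode)

lemma cond_edge_encode:
  "finite E \<Longrightarrow> cond_edge (cond_encode m G (set_encode (prod_encode ` E)) t s) a b \<longleftrightarrow> (a, b) \<in> E"
  unfolding cond_edge_def using inj_prod_encode[of UNIV] by (auto simp: inj_image_mem_iff)

lemma cond_promises_encode:
  "finite G \<Longrightarrow> cond_promises (cond_encode m (set_encode G) E t s) i \<longleftrightarrow> i \<in> G"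
  unfolding cond_promises_def by simp

text \<open>The quantifiers are bounded so that validity is primitive recursive. \<open>Rt t\<close> and
  \<open>Wt t\<close> are the stage \<open>t\<close> approximations of \<open>\<prec>\<close> and of \<open>W\<close>.\<close>

definition valid :: "(nat \<Rightarrow> nat \<Rightarrow> nat \<Rightarrow> bool) \<Rightarrow> (nat \<Rightarrow> nat \<Rightarrow> nat \<Rightarrow> bool) \<Rightarrow> nat \<Rightarrow> bool" where
  "valid Rt Wt x \<longleftrightarrow>
    (\<forall>a<cond_bound x. \<forall>b<cond_bound x. \<forall>c<cond_bound x.
       cond_edge x a b \<and> cond_edge x b c \<longrightarrow> cond_edge x a c) \<and>
    (\<forall>a<cond_stage x. \<forall>b<cond_stage x. Rt (cond_stage x) a b \<longrightarrow> cond_edge x a b) \<and>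
    (\<forall>p<cond_edge_code x. p \<in> set_decode (cond_edge_code x) \<longrightarrow>
       fst (prod_decode p) < cond_bound x \<and> snd (prod_decode p) < cond_bound x \<and>
       Rt (cond_bound x) (fst (prod_decode p)) (snd (prod_decode p))) \<and>
    (\<forall>i<cond_promise_code x. cond_promises x i \<longrightarrow>
       (\<forall>n<cond_stage x. \<not> (Wt (cond_stage x) i n \<and> cond_edge x n (cond_top x)))) \<and>
    (\<forall>i<cond_stage x. cond_promises x i \<or>
       (\<exists>n<cond_bound x. Wt (cond_bound x) i n \<and> cond_edge x n (cond_top x)))"

definition sq :: "(nat \<Rightarrow> nat \<Rightarrow> nat \<Rightarrow> bool) \<Rightarrow> (nat \<Rightarrow> nat \<Rightarrow> nat \<Rightarrow> bool) \<Rightarrow> nat \<Rightarrow> nat \<Rightarrow> bool" where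
  "sq Rt Wt x y \<longleftrightarrow> valid Rt Wt x \<and> valid Rt Wt y \<and> cond_edge y (cond_top x) (cond_top y) \<and>
    (\<forall>p<cond_edge_code x. p \<in> set_decode (cond_edge_code x) \<longrightarrow> p \<in> set_decode (cond_edge_code y)) \<and>
    cond_stage x < cond_stage y \<and>
    (\<forall>i<cond_promise_code x. cond_promises x i \<longrightarrow> cond_promises y i)"

lemma sq_iff:
  "sq Rt Wt x y \<longleftrightarrow> valid Rt Wt x \<and> valid Rt Wt y \<and> cond_edge y (cond_top x) (cond_top y) \<and>
    (\<forall>a b. cond_edge x a b \<longrightarrow> cond_edge y a b) \<and> cond_stage x < cond_stage y \<and>
    (\<forall>i. cond_promises x i \<longrightarrow> cond_promises y i)"
  unfolding sq_def cond_edge_def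
  by (metis cond_promises_less less_of_mem_set_decode prod_decode_inverse surj_pair)

lemma valid_cond_encode:
  assumes "finite G" "finite E" "trans E"
    and "\<And>a b. (a, b) \<in> E \<Longrightarrow> a < s \<and> b < s \<and> Rt s a b"
    and "\<And>a b. a < t \<Longrightarrow> b < t \<Longrightarrow> Rt t a b \<Longrightarrow> (a, b) \<in> E"
    and "\<And>i n. i \<in> G \<Longrightarrow> n < t \<Longrightarrow> Wt t i n \<Longrightarrow> (n, m) \<notin> E"
    and "\<And>i. i < t \<Longrightarrow> i \<notin> G \<Longrightarrow> \<exists>n<s. Wt s i n \<and> (n, m) \<in> E"
  shows "valid Rt Wt (cond_encode m (set_encode G) (set_encode (prod_encode ` E)) t s)"
proof -
  have codes: "fst (prod_decode p) < s \<and> snd (prod_decode p) < s \<and>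
      Rt s (fst (prod_decode p)) (snd (prod_decode p))"
    if "p \<in> set_decode (set_encode (prod_encode ` E))" for p
    using that assms(2,4) by auto
  show ?thesis
    unfolding valid_def cond_encode_sel cond_edge_encode[OF assms(2)]
      cond_promises_encode[OF assms(1)]
  proof (intro conjI)
    show "\<forall>a<s. \<forall>b<s. \<forall>c<s. (a, b) \<in> E \<and> (b, c) \<in> E \<longrightarrow> (a, c) \<in> E"
      using assms(3) by (blast dest: transD)
  qed (use codes assms(4-7) in blast)+
qed

locale staged_enumeration =
  fixes R :: "nat \<Rightarrow> nat \<Rightarrow> bool" and Rt :: "nat \<Rightarrow> nat \<Rightarrow> nat \<Rightarrow> bool"
    and W :: "nat \<Rightarrow> nat \<Rightarrow> bool" and Wt :: "nat \<Rightarrow> nat \<Rightarrow> nat \<Rightarrow> bool"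
  assumes transp_R: "transp R"
    and R_iff_stage: "R a b \<longleftrightarrow> (\<exists>t. Rt t a b)"
    and Rt_mono: "Rt t a b \<Longrightarrow> t \<le> t' \<Longrightarrow> Rt t' a b"
    and W_iff_stage: "W i n \<longleftrightarrow> (\<exists>t. Wt t i n)"
    and Wt_mono: "Wt t i n \<Longrightarrow> t \<le> t' \<Longrightarrow> Wt t' i n"
begin

abbreviation Valid :: "nat \<Rightarrow> bool" where
  "Valid \<equiv> valid Rt Wt"

abbreviation Sq :: "nat \<Rightarrow> nat \<Rightarrow> bool" where
  "Sq \<equiv> sq Rt Wt"

lemma R_trans: "R a b \<Longrightarrow> R b c \<Longrightarrow> R a c"
  using transp_R by (meson transpE)

lemma valid_edgeD:
  assumes "Valid x" "cond_edge x a b"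
  shows "a < cond_bound x" "b < cond_bound x" "Rt (cond_bound x) a b" "R a b"
proof -
  have p: "prod_encode (a, b) \<in> set_decode (cond_edge_code x)"
    using assms(2) by (simp add: cond_edge_def)
  then have "prod_encode (a, b) < cond_edge_code x"
    by (rule less_of_mem_set_decode)
  with p assms(1) show "a < cond_bound x" "b < cond_bound x" "Rt (cond_bound x) a b"
    unfolding valid_def by (metis fst_conv snd_conv prod_encode_inverse)+
  then show "R a b"
    using R_iff_stage by blast
qed

lemma valid_edge_trans: "Valid x \<Longrightarrow> cond_edge x a b \<Longrightarrow> cond_edge x b c \<Longrightarrow> cond_edge x a c"
  using valid_edgeD(1,2)[of x a b] valid_edgeD(2)[of x b c] unfolding valid_def by blast

lemma valid_edge_of_stage:
  "Valid x \<Longrightarrow> a < cond_stage x \<Longrightarrow> b < cond_stage x \<Longrightarrow> Rt (cond_stage x) a b \<Longrightarrow> cond_edge x a b"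
  unfolding valid_def by blast

lemma valid_promise_unrefuted:
  "Valid x \<Longrightarrow> cond_promises x i \<Longrightarrow> n < cond_stage x \<Longrightarrow> Wt (cond_stage x) i n
    \<Longrightarrow> \<not> cond_edge x n (cond_top x)"
  using cond_promises_less[of x i] unfolding valid_def by blast

lemma valid_decided:
  "Valid x \<Longrightarrow> i < cond_stage x
    \<Longrightarrow> cond_promises x i \<or> (\<exists>n. Wt (cond_bound x) i n \<and> cond_edge x n (cond_top x))"
  unfolding valid_def by blast

lemma finite_cond_edges: "Valid x \<Longrightarrow> finite {(a, b). cond_edge x a b}"
  by (rule finite_subset[of _ "{..<cond_bound x} \<times> {..<cond_bound x}"]) (auto dest: valid_edgeD)

lemma sq_trans: "Sq x y \<Longrightarrow> Sq y z \<Longrightarrow> Sq x z"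
  unfolding sq_iff by (meson less_trans valid_edge_trans)

lemma transp_sq: "transp Sq"
  by (meson sq_trans transpI)

lemma sq_edge_to_top: "Sq z z' \<Longrightarrow> cond_edge z n (cond_top z) \<Longrightarrow> cond_edge z' n (cond_top z')"
  unfolding sq_iff by (meson valid_edge_trans)

end

section \<open>Ideals\<close>

lemma ideal_nonempty: "is_ideal S J \<Longrightarrow> \<exists>x. x \<in> J"
  unfolding is_ideal_def by blast

lemma ideal_lower: "is_ideal S J \<Longrightarrow> y \<in> J \<Longrightarrow> S x y \<Longrightarrow> x \<in> J"
  unfolding is_ideal_def by blast

lemma ideal_directed: "is_ideal S J \<Longrightarrow> x \<in> J \<Longrightarrow> y \<in> J \<Longrightarrow> \<exists>z\<in>J. S x z \<and> S y z"
  unfolding is_ideal_def by blast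

lemma ideal_finite_upper_bound:
  assumes "transp S" "is_ideal S J" "finite F" "F \<subseteq> J"
  shows "\<exists>c\<in>J. \<forall>a\<in>F. S a c"
  using assms(3,4)
proof (induction F)
  case empty
  then show ?case
    using assms(2) ideal_nonempty ideal_directed by blast
next
  case (insert a F)
  then obtain c where "c \<in> J" "\<forall>b\<in>F. S b c"
    by blast
  moreover obtain c' where "c' \<in> J" "S a c'" "S c c'"
    using ideal_directed[OF assms(2)] calculation(1) insert.prems by blast
  ultimately have "\<forall>b\<in>insert a F. S b c'"
    using transpD[OF assms(1)] by blast
  then show ?case
    using \<open>c' \<in> J\<close> by blast
qed

lemma ideal_extend_finitely:
  assumes "transp S" "is_ideal S J" "finite F" "x \<in> J"
    and step: "\<And>j y. j \<in> F \<Longrightarrow> y \<in> J \<Longrightarrow> \<exists>z\<in>J. S y z \<and> P z j"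
    and persist: "\<And>j z z'. P z j \<Longrightarrow> S z z' \<Longrightarrow> P z' j"
  shows "\<exists>z\<in>J. S x z \<and> (\<forall>j\<in>F. P z j)"
  using assms(3) step
proof (induction F)
  case empty
  then show ?case
    using ideal_directed[OF assms(2,4,4)] by blast
next
  case (insert j F)
  then obtain z where z: "z \<in> J" "S x z" "\<forall>j\<in>F. P z j"
    by blast
  moreover obtain z' where "z' \<in> J" "S z z'" "P z' j"
    using insert.prems[of j z] z(1) by blast
  ultimately have "S x z'" "\<forall>j\<in>insert j F. P z' j"
    using transpD[OF assms(1)] persist by blast+
  then show ?case
    using \<open>z' \<in> J\<close> by blast
qed

lemma monotone_stage_bound:
  fixes Q :: "nat \<Rightarrow> 'a \<Rightarrow> bool"
  assumes "finite A" "\<And>x. x \<in> A \<Longrightarrow> \<exists>t. Q t x" "\<And>t t' x. Q t x \<Longrightarrow> t \<le> t' \<Longrightarrow> Q t' x"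
  shows "\<exists>s. \<forall>x\<in>A. Q s x"
  using assms(1,2)
proof (induction A)
  case (insert x A)
  then obtain s t where s: "\<forall>y\<in>A. Q s y" and t: "Q t x"
    by blast
  have "Q (max s t) y" if "y \<in> insert x A" for y
    using that s assms(3)[OF t max.cobounded2] assms(3)[OF _ max.cobounded1] by auto
  then show ?case
    by blast
qed simp

context staged_enumeration
begin

definition lift_ideal :: "nat set \<Rightarrow> nat set" where
  "lift_ideal I = {x. Valid x \<and> cond_top x \<in> I \<and> (\<forall>i. cond_promises x i \<longrightarrow> (\<forall>n\<in>I. \<not> W i n))}"

definition base_ideal :: "nat set \<Rightarrow> nat set" where
  "base_ideal J = {n. \<exists>x\<in>J. R n (cond_top x)}"

context
  fixes J
  assumes J: "is_ideal Sq J"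
begin

lemma ideal_sq_valid: "x \<in> J \<Longrightarrow> Valid x"
  using ideal_directed[OF J] sq_iff by blast

lemma ideal_sq_stage_unbounded: "x \<in> J \<Longrightarrow> \<exists>z\<in>J. Sq x z \<and> N \<le> cond_stage z"
proof (induction N)
  case 0
  then show ?case
    using ideal_directed[OF J] by blast
next
  case (Suc N)
  then obtain z where "z \<in> J" "Sq x z" "N \<le> cond_stage z"
    by blast
  moreover obtain z' where "z' \<in> J" "Sq z z'"
    using ideal_directed[OF J] calculation(1) by blast
  ultimately show ?case
    using sq_trans sq_iff by (metis Suc_leI le_less_trans)
qed

lemma top_mem_base_ideal: "x \<in> J \<Longrightarrow> cond_top x \<in> base_ideal J"
  unfolding base_ideal_def using ideal_directed[OF J] sq_iff valid_edgeD(4) by blast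

lemma base_ideal_edge:
  assumes "n \<in> base_ideal J" "x \<in> J"
  shows "\<exists>z\<in>J. Sq x z \<and> cond_edge z n (cond_top z) \<and> N \<le> cond_stage z"
proof -
  obtain y where y: "y \<in> J" "R n (cond_top y)"
    using assms(1) unfolding base_ideal_def by blast
  obtain w where w: "Rt w n (cond_top y)"
    using y(2) R_iff_stage by blast
  obtain u where u: "u \<in> J" "Sq x u" "Sq y u"
    using ideal_directed[OF J assms(2) y(1)] by blast
  obtain z where z: "z \<in> J" "Sq u z" "max (max w N) (max (Suc n) (Suc (cond_top y))) \<le> cond_stage z"
    using ideal_sq_stage_unbounded[OF u(1)] by blast
  \<comment> \<open>once the stage of \<open>z\<close> passes \<open>w\<close>, the pair \<open>(n, cond_top y)\<close> must be an edge of \<open>z\<close>\<close>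
  have "cond_edge z n (cond_top y)"
    using z(2,3) Rt_mono[OF w] by (intro valid_edge_of_stage) (auto simp: sq_iff)
  moreover have "cond_edge z (cond_top y) (cond_top z)"
    using u(3) z(2) sq_edge_to_top sq_iff by (meson valid_edge_trans)
  ultimately have "cond_edge z n (cond_top z)"
    using z(2) valid_edge_trans sq_iff by blast
  then show ?thesis
    using z u(2) sq_trans by auto
qed

lemma promise_kept:
  assumes "x \<in> J" "cond_promises x i" "n \<in> base_ideal J"
  shows "\<not> W i n"
proof
  assume "W i n"
  then obtain w where w: "Wt w i n"
    using W_iff_stage by blast
  obtain z where z: "z \<in> J" "Sq x z" "cond_edge z n (cond_top z)" "max w (Suc n) \<le> cond_stage z"
    using base_ideal_edge[OF assms(3,1)] by blast
  then have "Valid z" "cond_promises z i"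
    using assms(2) sq_iff by blast+
  with z(3,4) Wt_mono[OF w] show False
    using valid_promise_unrefuted by fastforce
qed

lemma promise_made:
  assumes "x \<in> J" "\<forall>n\<in>base_ideal J. \<not> W i n"
  shows "\<exists>z\<in>J. Sq x z \<and> cond_promises z i"
proof -
  obtain z where z: "z \<in> J" "Sq x z" "Suc i \<le> cond_stage z"
    using ideal_sq_stage_unbounded[OF assms(1)] by blast
  have "cond_promises z i"
  proof (rule ccontr)
    assume "\<not> cond_promises z i"
    then obtain n where "Wt (cond_bound z) i n" "cond_edge z n (cond_top z)"
      using valid_decided[OF ideal_sq_valid[OF z(1)], of i] z(3) by auto
    moreover from this(2) have "n \<in> base_ideal J"
      unfolding base_ideal_def using valid_edgeD(4) ideal_sq_valid z(1) by blast
    ultimately show False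
      using assms(2) W_iff_stage by blast
  qed
  then show ?thesis
    using z by blast
qed

lemma base_ideal_is_ideal: "is_ideal R (base_ideal J)"
  unfolding is_ideal_def
proof (intro conjI ballI allI impI)
  show "base_ideal J \<noteq> {}"
    using ideal_nonempty[OF J] top_mem_base_ideal by blast
next
  fix n m
  assume "n \<in> base_ideal J" "R m n"
  then show "m \<in> base_ideal J"
    unfolding base_ideal_def using R_trans by blast
next
  fix a b
  assume "a \<in> base_ideal J" "b \<in> base_ideal J"
  then obtain x y where "x \<in> J" "R a (cond_top x)" "y \<in> J" "R b (cond_top y)"
    unfolding base_ideal_def by blast
  moreover obtain z where "z \<in> J" "Sq x z" "Sq y z"
    using ideal_directed[OF J] calculation by blast
  moreover have "R (cond_top x) (cond_top z)" "R (cond_top y) (cond_top z)"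
    using calculation valid_edgeD(4) sq_iff by blast+
  ultimately show "\<exists>c\<in>base_ideal J. R a c \<and> R b c"
    using top_mem_base_ideal R_trans by blast
qed

lemma lift_base_ideal: "lift_ideal (base_ideal J) = J"
proof
  show "J \<subseteq> lift_ideal (base_ideal J)"
    unfolding lift_ideal_def using ideal_sq_valid top_mem_base_ideal promise_kept by blast
next
  show "lift_ideal (base_ideal J) \<subseteq> J"
  proof
    fix x
    assume "x \<in> lift_ideal (base_ideal J)"
    then have vx: "Valid x" and top: "cond_top x \<in> base_ideal J"
      and kept: "\<And>i n. cond_promises x i \<Longrightarrow> n \<in> base_ideal J \<Longrightarrow> \<not> W i n"
      unfolding lift_ideal_def by blast+
    obtain x0 where "x0 \<in> J"
      using ideal_nonempty[OF J] by blast
    then obtain z1 where z1: "z1 \<in> J" "cond_edge z1 (cond_top x) (cond_top z1)"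
        "max (cond_stage x) (cond_bound x) \<le> cond_stage z1"
      using base_ideal_edge[OF top] by blast
    have "\<exists>z\<in>J. Sq z1 z \<and> (\<forall>i\<in>set_decode (cond_promise_code x). cond_promises z i)"
      using transp_sq J finite_set_decode z1(1)
    proof (rule ideal_extend_finitely)
      show "\<exists>z\<in>J. Sq y z \<and> cond_promises z i" if "i \<in> set_decode (cond_promise_code x)" "y \<in> J" for i y
        using that promise_made kept unfolding cond_promises_def by blast
    qed (auto simp: sq_iff)
    then obtain z where z: "z \<in> J" "Sq z1 z" "\<And>i. cond_promises x i \<Longrightarrow> cond_promises z i"
      unfolding cond_promises_def by blast
    \<comment> \<open>every edge of \<open>x\<close> is enumerated by stage \<open>cond_bound x \<le> cond_stage z1\<close>\<close>
    have "cond_edge z1 a b" if "cond_edge x a b" for a b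
      using valid_edgeD[OF vx that] z1(3) Rt_mono ideal_sq_valid[OF z1(1)]
      by (intro valid_edge_of_stage) (auto simp: max_def split: if_splits)
    moreover have "cond_stage z1 < cond_stage z" "\<And>a b. cond_edge z1 a b \<Longrightarrow> cond_edge z a b"
      using z(2) unfolding sq_iff by blast+
    ultimately have "Sq x z"
      unfolding sq_iff using vx ideal_sq_valid[OF z(1)] sq_edge_to_top[OF z(2) z1(2)] z(3) z1(3)
      by auto
    then show "x \<in> J"
      using ideal_lower[OF J z(1)] by blast
  qed
qed

end

lemma finite_R_stage_bound:
  assumes "finite E" "E \<subseteq> {(a, b). R a b}"
  shows "\<exists>s. \<forall>p\<in>E. fst p < s \<and> snd p < s \<and> Rt s (fst p) (snd p)"
proof (rule monotone_stage_bound[OF assms(1)])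
  fix p
  assume "p \<in> E"
  then obtain w where "Rt w (fst p) (snd p)"
    using assms(2) R_iff_stage by auto
  then have "Rt (Suc (max w (max (fst p) (snd p)))) (fst p) (snd p)"
    by (rule Rt_mono) simp
  then show "\<exists>s. fst p < s \<and> snd p < s \<and> Rt s (fst p) (snd p)"
    by (intro exI[of _ "Suc (max w (max (fst p) (snd p)))"]) auto
next
  fix s s' p
  assume "fst p < s \<and> snd p < s \<and> Rt s (fst p) (snd p)" "s \<le> s'"
  then show "fst p < s' \<and> snd p < s' \<and> Rt s' (fst p) (snd p)"
    using Rt_mono by auto
qed

lemma finite_W_stage_bound:
  assumes "finite A" "\<And>i. i \<in> A \<Longrightarrow> W i (nb i)"
  shows "\<exists>s. \<forall>i\<in>A. nb i < s \<and> Wt s i (nb i)"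
proof (rule monotone_stage_bound[OF assms(1)])
  fix i
  assume "i \<in> A"
  then obtain w where "Wt w i (nb i)"
    using assms(2) W_iff_stage by blast
  then have "Wt (Suc (max w (nb i))) i (nb i)"
    by (rule Wt_mono) simp
  then show "\<exists>s. nb i < s \<and> Wt s i (nb i)"
    by (intro exI[of _ "Suc (max w (nb i))"]) auto
next
  fix s s' i
  assume "nb i < s \<and> Wt s i (nb i)" "s \<le> s'"
  then show "nb i < s' \<and> Wt s' i (nb i)"
    using Wt_mono by auto
qed

lemma common_edge_relation:
  assumes v1: "Valid x1" and v2: "Valid x2"
    and top: "R (cond_top x1) c" "R (cond_top x2) c"
    and N: "finite N" "\<And>n. n \<in> N \<Longrightarrow> R n c"
  obtains E where "finite E" "trans E" "E \<subseteq> {(a, b). R a b}"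
    "\<And>a b. cond_edge x1 a b \<Longrightarrow> (a, b) \<in> E" "\<And>a b. cond_edge x2 a b \<Longrightarrow> (a, b) \<in> E"
    "\<And>a b. a < t \<Longrightarrow> b < t \<Longrightarrow> Rt t a b \<Longrightarrow> (a, b) \<in> E"
    "(cond_top x1, c) \<in> E" "(cond_top x2, c) \<in> E" "\<And>n. n \<in> N \<Longrightarrow> (n, c) \<in> E"
proof -
  define B where "B = {(a, b). cond_edge x1 a b} \<union> {(a, b). cond_edge x2 a b}
    \<union> {(a, b). a < t \<and> b < t \<and> Rt t a b} \<union> {(cond_top x1, c), (cond_top x2, c)} \<union> (\<lambda>n. (n, c)) ` N"
  have "finite {(a, b). a < t \<and> b < t \<and> Rt t a b}"
    by (rule finite_subset[of _ "{..<t} \<times> {..<t}"]) auto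
  then have "finite B"
    unfolding B_def using finite_cond_edges[OF v1] finite_cond_edges[OF v2] N(1) by simp
  then have "finite (B\<^sup>+)"
    by (simp add: finite_trancl)
  moreover have "B \<subseteq> {(a, b). R a b}"
    unfolding B_def using valid_edgeD(4)[OF v1] valid_edgeD(4)[OF v2] top N(2) R_iff_stage by auto
  moreover have "trans {(a, b). R a b}"
    using transp_R by (simp add: trans_def transp_def)
  ultimately have "finite (B\<^sup>+)" "B\<^sup>+ \<subseteq> {(a, b). R a b}"
    using trancl_mono trancl_id by blast+
  moreover have "B \<subseteq> B\<^sup>+"
    by auto
  ultimately show ?thesis
    using that[of "B\<^sup>+"] trans_trancl[of B] unfolding B_def by blast
qed

lemma common_extension:
  assumes v1: "Valid x1" and v2: "Valid x2"
    and top: "R (cond_top x1) c" "R (cond_top x2) c"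
    and "finite G" and G: "\<And>i. cond_promises x1 i \<Longrightarrow> i \<in> G" "\<And>i. cond_promises x2 i \<Longrightarrow> i \<in> G"
    and kept: "\<And>i n. i \<in> G \<Longrightarrow> R n c \<Longrightarrow> \<not> W i n"
    and refuted: "\<And>i. i < t \<Longrightarrow> i \<notin> G \<Longrightarrow> \<exists>n. R n c \<and> W i n"
    and t: "cond_stage x1 < t" "cond_stage x2 < t"
  shows "\<exists>z. Valid z \<and> cond_top z = c \<and> (\<forall>i. cond_promises z i \<longleftrightarrow> i \<in> G) \<and> Sq x1 z \<and> Sq x2 z"
proof -
  define Bad where "Bad = {i. i < t \<and> i \<notin> G}"
  have "\<forall>i\<in>Bad. \<exists>n. R n c \<and> W i n"
    using refuted unfolding Bad_def by blast
  then obtain nb where nb: "\<And>i. i \<in> Bad \<Longrightarrow> R (nb i) c \<and> W i (nb i)"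
    by (metis bchoice)
  have "finite (nb ` Bad)"
    unfolding Bad_def by simp
  moreover have "\<And>n. n \<in> nb ` Bad \<Longrightarrow> R n c"
    using nb by blast
  ultimately obtain E where finE: "finite E" and "trans E" and ER: "E \<subseteq> {(a, b). R a b}"
    and E1: "\<And>a b. cond_edge x1 a b \<Longrightarrow> (a, b) \<in> E" and E2: "\<And>a b. cond_edge x2 a b \<Longrightarrow> (a, b) \<in> E"
    and Et: "\<And>a b. a < t \<Longrightarrow> b < t \<Longrightarrow> Rt t a b \<Longrightarrow> (a, b) \<in> E"
    and Etop: "(cond_top x1, c) \<in> E" "(cond_top x2, c) \<in> E"
    and Enb: "\<And>n. n \<in> nb ` Bad \<Longrightarrow> (n, c) \<in> E"
    using common_edge_relation[where t = t, OF v1 v2 top] by blast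
  obtain s1 where s1: "\<forall>p\<in>E. fst p < s1 \<and> snd p < s1 \<and> Rt s1 (fst p) (snd p)"
    using finite_R_stage_bound[OF finE ER] by blast
  obtain s2 where s2: "\<forall>i\<in>Bad. nb i < s2 \<and> Wt s2 i (nb i)"
    using finite_W_stage_bound[of Bad nb] nb unfolding Bad_def by auto
  define s where "s = max s1 s2"
  define z where "z = cond_encode c (set_encode G) (set_encode (prod_encode ` E)) t s"
  have "Valid z"
    unfolding z_def
  proof (rule valid_cond_encode[OF \<open>finite G\<close> finE])
    show "trans E"
      by fact
    show "a < s \<and> b < s \<and> Rt s a b" if "(a, b) \<in> E" for a b
    proof -
      from s1 that have "a < s1" "b < s1" "Rt s1 a b"
        by auto
      then show ?thesis
        unfolding s_def using Rt_mono[of s1 a b "max s1 s2"] by auto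
    qed
    show "(a, b) \<in> E" if "a < t" "b < t" "Rt t a b" for a b
      using that by (rule Et)
    show "(n, c) \<notin> E" if "i \<in> G" "Wt t i n" for i n
    proof
      assume "(n, c) \<in> E"
      then have "R n c"
        using ER by blast
      moreover have "W i n"
        using that(2) W_iff_stage by blast
      ultimately show False
        using kept that(1) by blast
    qed
    show "\<exists>n<s. Wt s i n \<and> (n, c) \<in> E" if "i < t" "i \<notin> G" for i
    proof -
      have "i \<in> Bad"
        using that unfolding Bad_def by blast
      then have "nb i < s" "Wt s i (nb i)" "(nb i, c) \<in> E"
        using s2 Wt_mono[of s2 i "nb i" s] Enb unfolding s_def by auto
      then show ?thesis
        by blast
    qed
  qed
  moreover have "cond_edge z a b \<longleftrightarrow> (a, b) \<in> E" "cond_promises z i \<longleftrightarrow> i \<in> G" for a b i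
    unfolding z_def using cond_edge_encode[OF finE] cond_promises_encode[OF \<open>finite G\<close>] by blast+
  moreover have "cond_top z = c" "cond_stage z = t"
    by (simp_all add: z_def)
  ultimately show ?thesis
    using v1 v2 G t E1 E2 Etop unfolding sq_iff by (intro exI[of _ z]) auto
qed

lemma lift_ideal_directed:
  assumes I: "is_ideal R I" and x1: "x1 \<in> lift_ideal I" and x2: "x2 \<in> lift_ideal I"
  shows "\<exists>z\<in>lift_ideal I. Sq x1 z \<and> Sq x2 z"
proof -
  define t where "t = Suc (max (cond_stage x1) (cond_stage x2))"
  define G where "G = {i. i < t \<and> (\<forall>n\<in>I. \<not> W i n)} \<union> {i. cond_promises x1 i} \<union> {i. cond_promises x2 i}"
  have "G \<subseteq> {..<t} \<union> {..<cond_promise_code x1} \<union> {..<cond_promise_code x2}"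
    unfolding G_def using cond_promises_less by auto
  then have "finite G"
    by (rule finite_subset) simp
  have G_kept: "\<forall>n\<in>I. \<not> W i n" if "i \<in> G" for i
    using that x1 x2 unfolding G_def lift_ideal_def by blast
  define Bad where "Bad = {i. i < t \<and> i \<notin> G}"
  have "\<forall>i\<in>Bad. \<exists>n. n \<in> I \<and> W i n"
    unfolding Bad_def G_def by blast
  then obtain nb where nb: "\<And>i. i \<in> Bad \<Longrightarrow> nb i \<in> I \<and> W i (nb i)"
    by (metis bchoice)
  have "finite Bad"
    unfolding Bad_def by (rule finite_subset[of _ "{..<t}"]) auto
  then have "finite ({cond_top x1, cond_top x2} \<union> nb ` Bad)"
    by simp
  moreover have "{cond_top x1, cond_top x2} \<union> nb ` Bad \<subseteq> I"
    using x1 x2 nb unfolding lift_ideal_def by auto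
  ultimately have "\<exists>c\<in>I. \<forall>a\<in>{cond_top x1, cond_top x2} \<union> nb ` Bad. R a c"
    by (rule ideal_finite_upper_bound[OF transp_R I])
  then obtain c where c: "c \<in> I" "\<forall>a\<in>{cond_top x1, cond_top x2} \<union> nb ` Bad. R a c"
    by blast
  have "\<exists>z. Valid z \<and> cond_top z = c \<and> (\<forall>i. cond_promises z i \<longleftrightarrow> i \<in> G) \<and> Sq x1 z \<and> Sq x2 z"
  proof (rule common_extension)
    show "Valid x1" "Valid x2"
      using x1 x2 unfolding lift_ideal_def by blast+
    show "R (cond_top x1) c" "R (cond_top x2) c"
      using c(2) by blast+
    show "finite G"
      by fact
    show "i \<in> G" if "cond_promises x1 i" for i
      using that unfolding G_def by blast
    show "i \<in> G" if "cond_promises x2 i" for i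
      using that unfolding G_def by blast
    show "\<not> W i n" if "i \<in> G" "R n c" for i n
      using that G_kept ideal_lower[OF I c(1)] by blast
    show "\<exists>n. R n c \<and> W i n" if "i < t" "i \<notin> G" for i
      using that nb c(2) unfolding Bad_def by blast
    show "cond_stage x1 < t" "cond_stage x2 < t"
      unfolding t_def by auto
  qed
  then obtain z where z: "Valid z" "cond_top z = c" "\<forall>i. cond_promises z i \<longleftrightarrow> i \<in> G" "Sq x1 z" "Sq x2 z"
    by blast
  then have "z \<in> lift_ideal I"
    unfolding lift_ideal_def using c(1) G_kept by blast
  then show ?thesis
    using z by blast
qed

lemma valid_singleton: "Valid (cond_encode n 0 0 0 0)"
  unfolding valid_def cond_promises_def by simp

lemma lift_ideal_is_ideal:
  assumes I: "is_ideal R I"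
  shows "is_ideal Sq (lift_ideal I)"
  unfolding is_ideal_def
proof (intro conjI ballI allI impI)
  obtain n where "n \<in> I"
    using ideal_nonempty[OF I] by blast
  then have "cond_encode n 0 0 0 0 \<in> lift_ideal I"
    unfolding lift_ideal_def cond_promises_def using valid_singleton by simp
  then show "lift_ideal I \<noteq> {}"
    by blast
next
  fix y x
  assume "y \<in> lift_ideal I" "Sq x y"
  then show "x \<in> lift_ideal I"
    unfolding lift_ideal_def sq_iff using valid_edgeD(4) ideal_lower[OF I] by blast
next
  fix a b
  assume "a \<in> lift_ideal I" "b \<in> lift_ideal I"
  then show "\<exists>c\<in>lift_ideal I. Sq a c \<and> Sq b c"
    by (rule lift_ideal_directed[OF I])
qed

lemma base_lift_ideal:
  assumes I: "is_ideal R I"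
  shows "base_ideal (lift_ideal I) = I"
proof
  show "base_ideal (lift_ideal I) \<subseteq> I"
    unfolding base_ideal_def lift_ideal_def using ideal_lower[OF I] by blast
next
  show "I \<subseteq> base_ideal (lift_ideal I)"
  proof
    fix n
    assume "n \<in> I"
    then obtain c where "c \<in> I" "R n c"
      using ideal_directed[OF I] by blast
    moreover have "cond_encode c 0 0 0 0 \<in> lift_ideal I"
      unfolding lift_ideal_def cond_promises_def using valid_singleton calculation by simp
    ultimately show "n \<in> base_ideal (lift_ideal I)"
      unfolding base_ideal_def by force
  qed
qed

end

section \<open>The homeomorphism\<close>

lemma topspace_ideal_topology: "topspace (ideal_topology S) = Ideals S"
  unfolding ideal_topology_def topology_generated_by_topspace bopen_def Ideals_def is_ideal_def
  by blast

lemma topspace_ext_topology: "topspace (ext_topology R W) = Ideals R"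
proof -
  have "\<Union> (range (bopen R) \<union> range (coce_closed R W)) = Ideals R"
    unfolding bopen_def coce_closed_def Ideals_def is_ideal_def by blast
  then show ?thesis
    unfolding ext_topology_def topology_generated_by_topspace .
qed

lemma mem_coce_closed: "I \<in> coce_closed R W i \<longleftrightarrow> I \<in> Ideals R \<and> (\<forall>n\<in>I. \<not> W i n)"
  unfolding coce_closed_def bopen_def by blast

lemma mem_subbasic:
  "I \<in> subbasic R W j \<longleftrightarrow> I \<in> Ideals R \<and>
    (even j \<longrightarrow> j div 2 \<in> I) \<and> (odd j \<longrightarrow> (\<forall>n\<in>I. \<not> W (j div 2) n))"
  by (auto simp: subbasic_def mem_coce_closed bopen_def)

lemma mem_ext_basic:
  "I \<in> ext_basic R W k \<longleftrightarrow> I \<in> Ideals R \<and>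
    (\<forall>j\<in>set_decode k. (even j \<longrightarrow> j div 2 \<in> I) \<and> (odd j \<longrightarrow> (\<forall>n\<in>I. \<not> W (j div 2) n)))"
proof -
  have "I \<in> ext_basic R W k \<longleftrightarrow> I \<in> Ideals R \<and> (\<forall>j\<in>set_decode k. I \<in> subbasic R W j)"
    unfolding ext_basic_def by blast
  then show ?thesis
    unfolding mem_subbasic by blast
qed

lemma openin_ext_basic: "openin (ext_topology R W) (ext_basic R W k)"
proof -
  have subbasic: "openin (ext_topology R W) (subbasic R W j)" for j
    unfolding ext_topology_def subbasic_def by (auto intro: topology_generated_by_Basis)
  have "openin (ext_topology R W) (topspace (ext_topology R W) \<inter> (\<Inter>j\<in>F. subbasic R W j))"
    if "finite F" for F
    using that
  proof (induction F rule: finite_induct)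
    case (insert a F)
    then have "openin (ext_topology R W)
        (subbasic R W a \<inter> (topspace (ext_topology R W) \<inter> (\<Inter>j\<in>F. subbasic R W j)))"
      using subbasic by blast
    moreover have "subbasic R W a \<inter> (topspace (ext_topology R W) \<inter> (\<Inter>j\<in>F. subbasic R W j)) =
        topspace (ext_topology R W) \<inter> (\<Inter>j\<in>insert a F. subbasic R W j)"
      by blast
    ultimately show ?case
      by simp
  qed simp
  from this[OF finite_set_decode] show ?thesis
    unfolding ext_basic_def topspace_ext_topology .
qed

lemma bopen_eq_ext_basic: "bopen R n = ext_basic R W (set_encode {2 * n})"
proof -
  have "set_decode (set_encode {2 * n}) = {2 * n}"
    by (rule set_encode_inverse) simp
  then show ?thesis
    unfolding ext_basic_def subbasic_def bopen_def by auto
qed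

lemma coce_closed_eq_ext_basic: "coce_closed R W i = ext_basic R W (set_encode {Suc (2 * i)})"
proof -
  have "set_decode (set_encode {Suc (2 * i)}) = {Suc (2 * i)}"
    by (rule set_encode_inverse) simp
  then show ?thesis
    unfolding ext_basic_def subbasic_def coce_closed_def by auto
qed

text \<open>The relations \<open>V\<close> and \<open>V'\<close> witnessing computability of the homeomorphism: a basic set of
  the extended space is mapped into \<open>[m]\<^sub>\<sqsubset>\<close> as soon as it asks for everything the condition \<open>m\<close>
  asserts, and \<open>[x]\<^sub>\<sqsubset>\<close> is mapped into the basic set \<open>k\<close> as soon as the condition \<open>x\<close> asserts
  everything \<open>k\<close> asks for.\<close>

definition lift_cover :: "(nat \<Rightarrow> nat \<Rightarrow> nat \<Rightarrow> bool) \<Rightarrow> (nat \<Rightarrow> nat \<Rightarrow> nat \<Rightarrow> bool) \<Rightarrow> nat \<Rightarrow> nat \<Rightarrow> bool" where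
  "lift_cover Rt Wt m k \<longleftrightarrow> valid Rt Wt m \<and> 2 * cond_top m \<in> set_decode k \<and>
    (\<forall>i<cond_promise_code m. cond_promises m i \<longrightarrow> Suc (2 * i) \<in> set_decode k)"

definition base_cover :: "(nat \<Rightarrow> nat \<Rightarrow> nat \<Rightarrow> bool) \<Rightarrow> (nat \<Rightarrow> nat \<Rightarrow> nat \<Rightarrow> bool) \<Rightarrow> nat \<Rightarrow> nat \<Rightarrow> bool" where
  "base_cover Rt Wt k x \<longleftrightarrow> valid Rt Wt x \<and>
    (\<forall>j<k. j \<in> set_decode k \<longrightarrow>
       (even j \<longrightarrow> cond_edge x (j div 2) (cond_top x)) \<and> (odd j \<longrightarrow> cond_promises x (j div 2)))"

context staged_enumeration
begin

lemma lift_preimage_bopen: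
  "{I \<in> topspace (ext_topology R W). lift_ideal I \<in> bopen Sq m} = (\<Union>k\<in>{k. lift_cover Rt Wt m k}. ext_basic R W k)"
proof (intro equalityI subsetI)
  fix I
  assume "I \<in> {I \<in> topspace (ext_topology R W). lift_ideal I \<in> bopen Sq m}"
  then have I: "I \<in> Ideals R" and "m \<in> lift_ideal I"
    unfolding topspace_ext_topology bopen_def by auto
  then have m: "Valid m" "cond_top m \<in> I" "\<And>i n. cond_promises m i \<Longrightarrow> n \<in> I \<Longrightarrow> \<not> W i n"
    unfolding lift_ideal_def by blast+
  define K where "K = insert (2 * cond_top m) ((\<lambda>i. Suc (2 * i)) ` {i. cond_promises m i})"
  have "{i. cond_promises m i} \<subseteq> {..<cond_promise_code m}"
    using cond_promises_less by blast
  then have "finite K"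
    unfolding K_def using finite_subset by blast
  then have "lift_cover Rt Wt m (set_encode K)" "I \<in> ext_basic R W (set_encode K)"
    unfolding lift_cover_def mem_ext_basic using I m by (auto simp: K_def)
  then show "I \<in> (\<Union>k\<in>{k. lift_cover Rt Wt m k}. ext_basic R W k)"
    by blast
next
  fix I
  assume "I \<in> (\<Union>k\<in>{k. lift_cover Rt Wt m k}. ext_basic R W k)"
  then obtain k where k: "lift_cover Rt Wt m k" "I \<in> ext_basic R W k"
    by blast
  then have I: "is_ideal R I"
    unfolding mem_ext_basic Ideals_def by blast
  have "cond_top m \<in> I"
    using k unfolding lift_cover_def mem_ext_basic by fastforce
  moreover have "\<not> W i n" if "cond_promises m i" "n \<in> I" for i n
  proof -
    have "Suc (2 * i) \<in> set_decode k"
      using k(1) that(1) cond_promises_less unfolding lift_cover_def by blast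
    then show ?thesis
      using k(2) that(2) unfolding mem_ext_basic by fastforce
  qed
  ultimately have "m \<in> lift_ideal I"
    using k(1) unfolding lift_ideal_def lift_cover_def by blast
  then show "I \<in> {I \<in> topspace (ext_topology R W). lift_ideal I \<in> bopen Sq m}"
    using I lift_ideal_is_ideal[OF I] unfolding topspace_ext_topology bopen_def Ideals_def by blast
qed

lemma ideal_meets_base_cover:
  assumes J: "is_ideal Sq J" and JK: "base_ideal J \<in> ext_basic R W k"
  shows "\<exists>z\<in>J. base_cover Rt Wt k z"
proof -
  obtain x0 where x0: "x0 \<in> J"
    using ideal_nonempty[OF J] by blast
  have "\<exists>z\<in>J. Sq x0 z \<and> (\<forall>j\<in>set_decode k.
      (even j \<longrightarrow> cond_edge z (j div 2) (cond_top z)) \<and> (odd j \<longrightarrow> cond_promises z (j div 2)))"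
    using transp_sq J finite_set_decode x0
  proof (rule ideal_extend_finitely)
    fix j y
    assume j: "j \<in> set_decode k" and y: "y \<in> J"
    show "\<exists>z\<in>J. Sq y z \<and> (even j \<longrightarrow> cond_edge z (j div 2) (cond_top z)) \<and> (odd j \<longrightarrow> cond_promises z (j div 2))"
    proof (cases "even j")
      case True
      then have "j div 2 \<in> base_ideal J"
        using JK j unfolding mem_ext_basic by blast
      then show ?thesis
        using base_ideal_edge[OF J _ y] True by blast
    next
      case False
      then have "\<forall>n\<in>base_ideal J. \<not> W (j div 2) n"
        using JK j unfolding mem_ext_basic by blast
      then show ?thesis
        using promise_made[OF J y] False by blast
    qed
  qed (use sq_edge_to_top in \<open>auto simp: sq_iff\<close>)
  then show ?thesis
    unfolding base_cover_def using ideal_sq_valid[OF J] by blast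
qed

lemma base_cover_imp_ext_basic:
  assumes J: "is_ideal Sq J" and x: "x \<in> J" "base_cover Rt Wt k x"
  shows "base_ideal J \<in> ext_basic R W k"
proof -
  have "j div 2 \<in> base_ideal J" if "j \<in> set_decode k" "even j" for j
  proof -
    have "cond_edge x (j div 2) (cond_top x)"
      using x(2) that less_of_mem_set_decode unfolding base_cover_def by blast
    then show ?thesis
      unfolding base_ideal_def using valid_edgeD(4) x unfolding base_cover_def by blast
  qed
  moreover have "\<not> W (j div 2) n" if "j \<in> set_decode k" "odd j" "n \<in> base_ideal J" for j n
    using x that less_of_mem_set_decode promise_kept[OF J] unfolding base_cover_def by blast
  ultimately show ?thesis
    unfolding mem_ext_basic Ideals_def using base_ideal_is_ideal[OF J] by blast
qed

lemma base_preimage_ext_basic: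
  "{J \<in> topspace (ideal_topology Sq). base_ideal J \<in> ext_basic R W k} = (\<Union>x\<in>{x. base_cover Rt Wt k x}. bopen Sq x)"
proof (intro equalityI subsetI)
  fix J
  assume "J \<in> {J \<in> topspace (ideal_topology Sq). base_ideal J \<in> ext_basic R W k}"
  then have J: "is_ideal Sq J" and "base_ideal J \<in> ext_basic R W k"
    unfolding topspace_ideal_topology Ideals_def by auto
  then obtain z where "z \<in> J" "base_cover Rt Wt k z"
    using ideal_meets_base_cover by blast
  then show "J \<in> (\<Union>x\<in>{x. base_cover Rt Wt k x}. bopen Sq x)"
    unfolding bopen_def Ideals_def using J by blast
next
  fix J
  assume "J \<in> (\<Union>x\<in>{x. base_cover Rt Wt k x}. bopen Sq x)"
  then obtain x where "x \<in> J" "base_cover Rt Wt k x" and J: "is_ideal Sq J"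
    unfolding bopen_def Ideals_def by auto
  then show "J \<in> {J \<in> topspace (ideal_topology Sq). base_ideal J \<in> ext_basic R W k}"
    unfolding topspace_ideal_topology Ideals_def using base_cover_imp_ext_basic by blast
qed

lemma homeomorphic_maps_lift_base:
  "homeomorphic_maps (ext_topology R W) (ideal_topology Sq) lift_ideal base_ideal"
  unfolding homeomorphic_maps_def
proof (intro conjI ballI)
  show "continuous_map (ext_topology R W) (ideal_topology Sq) lift_ideal"
    unfolding ideal_topology_def
  proof (rule continuous_on_generated_topo)
    fix U
    assume "U \<in> range (bopen Sq)"
    then obtain m where "U = bopen Sq m"
      by blast
    then have "lift_ideal -` U \<inter> topspace (ext_topology R W) = (\<Union>k\<in>{k. lift_cover Rt Wt m k}. ext_basic R W k)"
      using lift_preimage_bopen by blast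
    then show "openin (ext_topology R W) (lift_ideal -` U \<inter> topspace (ext_topology R W))"
      using openin_ext_basic by auto
  next
    show "lift_ideal ` topspace (ext_topology R W) \<subseteq> \<Union> (range (bopen Sq))"
      using lift_ideal_is_ideal topspace_ideal_topology[of Sq]
      unfolding topspace_ext_topology ideal_topology_def Ideals_def by auto
  qed
next
  show "continuous_map (ideal_topology Sq) (ext_topology R W) base_ideal"
    unfolding ext_topology_def
  proof (rule continuous_on_generated_topo)
    fix U
    assume "U \<in> range (bopen R) \<union> range (coce_closed R W)"
    then obtain k where "U = ext_basic R W k"
      using bopen_eq_ext_basic coce_closed_eq_ext_basic by blast
    then have "base_ideal -` U \<inter> topspace (ideal_topology Sq) = (\<Union>x\<in>{x. base_cover Rt Wt k x}. bopen Sq x)"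
      using base_preimage_ext_basic by blast
    then show "openin (ideal_topology Sq) (base_ideal -` U \<inter> topspace (ideal_topology Sq))"
      unfolding ideal_topology_def by (auto intro: topology_generated_by_Basis)
  next
    show "base_ideal ` topspace (ideal_topology Sq) \<subseteq> \<Union> (range (bopen R) \<union> range (coce_closed R W))"
      using base_ideal_is_ideal topspace_ext_topology[of R W]
      unfolding topspace_ideal_topology ext_topology_def Ideals_def by auto
  qed
next
  show "base_ideal (lift_ideal I) = I" if "I \<in> topspace (ext_topology R W)" for I
    using that base_lift_ideal unfolding topspace_ext_topology Ideals_def by blast
  show "lift_ideal (base_ideal J) = J" if "J \<in> topspace (ideal_topology Sq)" for J
    using that lift_base_ideal unfolding topspace_ideal_topology Ideals_def by blast
qed

lemma computably_homeomorphic_sq: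
  "ce2 (lift_cover Rt Wt) \<Longrightarrow> ce2 (base_cover Rt Wt) \<Longrightarrow> computably_homeomorphic R W Sq"
  unfolding computably_homeomorphic_def
  using homeomorphic_maps_lift_base lift_preimage_bopen base_preimage_ext_basic by blast

end

section \<open>Effectivity\<close>

definition stage_approx :: "(nat list \<Rightarrow> nat) \<Rightarrow> nat \<Rightarrow> nat \<Rightarrow> nat \<Rightarrow> nat \<Rightarrow> bool" where
  "stage_approx f e t a b \<longleftrightarrow> (\<exists>w<t. f [w, e, a, b] \<noteq> 0)"

lemma stage_approx_mono: "stage_approx f e t a b \<Longrightarrow> t \<le> t' \<Longrightarrow> stage_approx f e t' a b"
  unfolding stage_approx_def by (meson less_le_trans)

lemma ce3_stage_approx:
  assumes "ce3 P"
  obtains f where "PR f" "\<And>e a b. P e a b \<longleftrightarrow> (\<exists>t. stage_approx f e t a b)"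
proof -
  obtain f where "PR f"
    and f: "\<forall>xs. length xs = 3 \<longrightarrow> (P (xs ! 0) (xs ! 1) (xs ! 2) \<longleftrightarrow> (\<exists>y. f (y # xs) \<noteq> 0))"
    using assms unfolding ce3_def ce_on_def by blast
  have "P e a b \<longleftrightarrow> (\<exists>t. stage_approx f e t a b)" for e a b
  proof -
    have "P e a b \<longleftrightarrow> (\<exists>w. f [w, e, a, b] \<noteq> 0)"
      using f[rule_format, of "[e, a, b]"] by simp
    also have "\<dots> \<longleftrightarrow> (\<exists>t. stage_approx f e t a b)"
      unfolding stage_approx_def by (metis lessI)
    finally show ?thesis .
  qed
  with \<open>PR f\<close> show ?thesis
    by (rule that)
qed

lemma staged_enumeration_stage_approx:
  assumes "transp R"
    and "\<And>a b. R a b \<longleftrightarrow> (\<exists>t. stage_approx f e t a b)"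
    and "\<And>i n. W i n \<longleftrightarrow> (\<exists>t. stage_approx g e t i n)"
  shows "staged_enumeration R (stage_approx f e) W (stage_approx g e)"
  using assms stage_approx_mono by unfold_locales blast+

lemma ce2I: "PR_pred (\<lambda>xs. P (proj 0 xs) (proj 1 xs)) \<Longrightarrow> ce2 P"
  unfolding ce2_def ce_on_def PR_pred_def
proof (intro exI conjI allI impI)
  show "PR (\<lambda>xs. if P (proj 0 xs) (proj 1 xs) then 1 else 0) \<Longrightarrow>
      PR (\<lambda>zs. if P (proj 0 (tl zs)) (proj 1 (tl zs)) then 1 else 0)"
    by (rule PR_tl)
  fix xs :: "nat list"
  assume "length xs = 2"
  then obtain a b where "xs = [a, b]"
    by (auto simp: length_Suc_conv numeral_2_eq_2)
  then show "P (xs ! 0) (xs ! 1) \<longleftrightarrow>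
      (\<exists>y. (\<lambda>zs. if P (proj 0 (tl zs)) (proj 1 (tl zs)) then 1 else 0) (y # xs) \<noteq> (0::nat))"
    by simp
qed

lemma ce3I: "PR_pred (\<lambda>xs. P (proj 0 xs) (proj 1 xs) (proj 2 xs)) \<Longrightarrow> ce3 P"
  unfolding ce3_def ce_on_def PR_pred_def
proof (intro exI conjI allI impI)
  show "PR (\<lambda>xs. if P (proj 0 xs) (proj 1 xs) (proj 2 xs) then 1 else 0) \<Longrightarrow>
      PR (\<lambda>zs. if P (proj 0 (tl zs)) (proj 1 (tl zs)) (proj 2 (tl zs)) then 1 else 0)"
    by (rule PR_tl)
  fix xs :: "nat list"
  assume "length xs = 3"
  then obtain a b c where "xs = [a, b, c]"
    by (auto simp: length_Suc_conv numeral_3_eq_3)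
  then show "P (xs ! 0) (xs ! 1) (xs ! 2) \<longleftrightarrow>
      (\<exists>y. (\<lambda>zs. if P (proj 0 (tl zs)) (proj 1 (tl zs)) (proj 2 (tl zs)) then 1 else 0) (y # xs) \<noteq> (0::nat))"
    by simp
qed

lemma PR_pred_stage_approx:
  assumes "PR f" "PR fe" "PR ft" "PR fa" "PR fb"
  shows "PR_pred (\<lambda>xs. stage_approx f (fe xs) (ft xs) (fa xs) (fb xs))"
  unfolding stage_approx_def
  by (intro PR_pred_bex_less PR_pred_nonzero PR_comp4[OF assms(1)] PR_proj
      PR_tl[OF assms(2)] PR_tl[OF assms(4)] PR_tl[OF assms(5)] assms(3))

lemma PR_cond_sel:
  assumes "PR f"
  shows "PR (\<lambda>xs. cond_top (f xs))" "PR (\<lambda>xs. cond_promise_code (f xs))"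
    "PR (\<lambda>xs. cond_edge_code (f xs))" "PR (\<lambda>xs. cond_stage (f xs))" "PR (\<lambda>xs. cond_bound (f xs))"
  unfolding cond_top_def cond_promise_code_def cond_edge_code_def cond_stage_def cond_bound_def
  by (intro PR_fst_prod_decode PR_snd_prod_decode assms)+

lemma PR_pred_cond_edge:
  "PR f \<Longrightarrow> PR a \<Longrightarrow> PR b \<Longrightarrow> PR_pred (\<lambda>xs. cond_edge (f xs) (a xs) (b xs))"
  unfolding cond_edge_def by (intro PR_pred_mem_set_decode PR_prod_encode PR_cond_sel)

lemma PR_pred_cond_promises: "PR f \<Longrightarrow> PR a \<Longrightarrow> PR_pred (\<lambda>xs. cond_promises (f xs) (a xs))"
  unfolding cond_promises_def by (intro PR_pred_mem_set_decode PR_cond_sel)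

lemma PR_pred_valid:
  assumes f: "PR f" and g: "PR g" and e: "PR fe" and x: "PR fx"
  shows "PR_pred (\<lambda>xs. valid (stage_approx f (fe xs)) (stage_approx g (fe xs)) (fx xs))"
proof -
  note e1 = PR_tl[OF e] and e2 = PR_tl[OF PR_tl[OF e]] and e3 = PR_tl[OF PR_tl[OF PR_tl[OF e]]]
  note x1 = PR_tl[OF x] and x2 = PR_tl[OF PR_tl[OF x]] and x3 = PR_tl[OF PR_tl[OF PR_tl[OF x]]]
  have p1: "PR (\<lambda>xs. proj i (tl (tl xs)))" and p2: "PR (\<lambda>xs. proj i (tl (tl (tl xs))))" for i
    by (simp_all add: proj_tl PR_proj)
  show ?thesis
    unfolding valid_def
    by (intro PR_pred_conj PR_pred_ball_less PR_pred_imp PR_pred_bex_less PR_pred_disj PR_pred_not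
        PR_pred_less PR_pred_mem_set_decode PR_pred_cond_edge PR_pred_cond_promises
        PR_pred_stage_approx[OF f] PR_pred_stage_approx[OF g] PR_fst_prod_decode PR_snd_prod_decode
        PR_cond_sel PR_proj PR_proj_tl p1 p2 e e1 e2 e3 x x1 x2 x3)
qed

lemma ce3_sq:
  assumes f: "PR f" and g: "PR g"
  shows "ce3 (\<lambda>e. sq (stage_approx f e) (stage_approx g e))"
proof (rule ce3I)
  have x1: "PR (\<lambda>xs. proj i (tl xs))" for i
    by (rule PR_proj_tl)
  show "PR_pred (\<lambda>xs. sq (stage_approx f (proj 0 xs)) (stage_approx g (proj 0 xs)) (proj 1 xs) (proj 2 xs))"
    unfolding sq_def
    by (intro PR_pred_conj PR_pred_ball_less PR_pred_imp PR_pred_less PR_pred_mem_set_decode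
        PR_pred_cond_edge PR_pred_cond_promises PR_pred_valid[OF f g] PR_cond_sel PR_proj x1)
qed

lemma ce2_lift_cover:
  assumes f: "PR f" and g: "PR g"
  shows "ce2 (lift_cover (stage_approx f e) (stage_approx g e))"
proof (rule ce2I)
  show "PR_pred (\<lambda>xs. lift_cover (stage_approx f e) (stage_approx g e) (proj 0 xs) (proj 1 xs))"
    unfolding lift_cover_def
    by (intro PR_pred_conj PR_pred_ball_less PR_pred_imp PR_pred_mem_set_decode
        PR_pred_cond_promises PR_pred_valid[OF f g] PR_mult PR_Suc PR_const PR_cond_sel PR_proj
        PR_proj_tl)
qed

lemma ce2_base_cover:
  assumes f: "PR f" and g: "PR g"
  shows "ce2 (base_cover (stage_approx f e) (stage_approx g e))"
proof (rule ce2I)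
  show "PR_pred (\<lambda>xs. base_cover (stage_approx f e) (stage_approx g e) (proj 0 xs) (proj 1 xs))"
    unfolding base_cover_def
    by (intro PR_pred_conj PR_pred_ball_less PR_pred_imp PR_pred_even PR_pred_odd
        PR_pred_mem_set_decode PR_pred_cond_edge PR_pred_cond_promises PR_pred_valid[OF f g]
        PR_div2 PR_const PR_cond_sel PR_proj PR_proj_tl)
qed

theorem corollary5:
  fixes Prec :: "nat \<Rightarrow> nat \<Rightarrow> nat \<Rightarrow> bool"
    and W :: "nat \<Rightarrow> nat \<Rightarrow> nat \<Rightarrow> bool"
  assumes "ce3 Prec"
    and "\<forall>e. transp (Prec e)"
    and "ce3 W"
  shows "\<exists>Sq :: nat \<Rightarrow> nat \<Rightarrow> nat \<Rightarrow> bool. ce3 Sq \<and> (\<forall>e. transp (Sq e))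
           \<and> (\<forall>e. computably_homeomorphic (Prec e) (W e) (Sq e))"
proof -
  obtain fP where fP: "PR fP" "\<And>e a b. Prec e a b \<longleftrightarrow> (\<exists>t. stage_approx fP e t a b)"
    using ce3_stage_approx[OF assms(1)] by blast
  obtain fW where fW: "PR fW" "\<And>e i n. W e i n \<longleftrightarrow> (\<exists>t. stage_approx fW e t i n)"
    using ce3_stage_approx[OF assms(3)] by blast
  have enum: "staged_enumeration (Prec e) (stage_approx fP e) (W e) (stage_approx fW e)" for e
    using assms(2) fP(2) fW(2) by (intro staged_enumeration_stage_approx) blast+
  show ?thesis
  proof (intro exI conjI allI)
    show "ce3 (\<lambda>e. sq (stage_approx fP e) (stage_approx fW e))"
      using fP(1) fW(1) by (rule ce3_sq)
    show "transp (sq (stage_approx fP e) (stage_approx fW e))" for e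
      using enum by (rule staged_enumeration.transp_sq)
    show "computably_homeomorphic (Prec e) (W e) (sq (stage_approx fP e) (stage_approx fW e))" for e
      using enum ce2_lift_cover[OF fP(1) fW(1)] ce2_base_cover[OF fP(1) fW(1)]
      by (rule staged_enumeration.computably_homeomorphic_sq)
  qed
qed

end
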